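(* Let $F_R(n)$ be the $n\times n$ Fibonacci--Redheffer matrix. Then, as $n\to\infty$, \[ \det(F_R(n))\sim C_0\,\phi^{\frac{n(n+1)}{2}}\,5^{-\frac{n}{2}}, \] where $C_0=C\cdot C_\phi\approx -0.7921376$, with $C=\lim_{n\to\infty}\sum_{k=1}^n\frac{\mu(k)}{F_k}$ and \[ C_\phi=\prod_{k=1}^{\infty}\left(1-b^k\right)\approx 1.226742,\qquad b=-\phi^{-2}. \]
   Context: The Fibonacci numbers are $F_1=F_2=1$, $F_n=F_{n-1}+F_{n-2}$ for $n\ge 3$, and $\phi=\frac{1+\sqrt5}{2}$ is the golden ratio. The Fibonacci--Redheffer matrix $F_R(n)=[F_R(i,j)]_{i,j=1}^n$ is defined by $F_R(i,j)=1$ if $j=1$; $F_R(i,j)=F_i$ if $i\mid j$; and $F_R(i,j)=0$ otherwise. $\mu$ denotes the Möbius function. For sequences, $a_n\sim b_n$ means $\lim_{n\to\infty} b_n/a_n=1$. *)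

theory Defs
  imports "HOL-Analysis.Analysis" "HOL-Number_Theory.Fib"
    "HOL-Computational_Algebra.Squarefree" "HOL-Library.Landau_Symbols"
    "Jordan_Normal_Form.Determinant"
begin

text \<open>Moebius function (mu 0 = 0 by convention; only used for k >= 1).\<close>
definition moebius :: "nat \<Rightarrow> real" where
  "moebius n = (if n = 0 \<or> \<not> squarefree n then 0 else (-1) ^ card (prime_factors n))"

definition phi :: real where "phi = (1 + sqrt 5) / 2"

text \<open>Fibonacci--Redheffer matrix F_R(n), n x n; the JNF matrix is 0-indexed, so
  entry (i,j) of the JNF matrix is F_R(i+1,j+1). Library fib: fib 1 = fib 2 = 1.\<close>
definition fib_redheffer :: "nat \<Rightarrow> real mat" where
  "fib_redheffer n = mat n n (\<lambda>(i, j).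
      if j + 1 = 1 then 1
      else if (i + 1) dvd (j + 1) then real (fib (i + 1)) else 0)"

definition const_C :: real where
  "const_C = lim (\<lambda>n. \<Sum>k=1..n. moebius k / real (fib k))"

definition const_C_phi :: real where
  "const_C_phi = (\<Prod>k. 1 - (- (phi powr (-2))) ^ (Suc k))"

end

theory Submission
  imports Defs
begin

(* Adding to the first row of F_R(n) the combination sum_k mu(k)/F_k (row k) clears that row
   except for its corner, which becomes S_n = sum_{k<=n} mu(k)/F_k, because the divisor sums of mu
   vanish; the remaining minor is upper triangular with diagonal F_2, ..., F_n. Hence
   det F_R(n) = S_n * F_1 * ... * F_n. Binet's formula F_k = phi^k (1 - b^k) / sqrt 5 turns the
   product into phi^(n(n+1)/2) 5^(-n/2) prod_{k<=n} (1 - b^k), whose last factor tends to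
   C_phi <> 0 as |b| < 1, while S_n tends to C, which a numerical estimate shows to be
   negative. *)

section \<open>The Moebius function\<close>

lemma sum_Pow_neg_one_power_card:
  assumes "finite A" "A \<noteq> {}"
  shows "(\<Sum>X\<in>Pow A. (-1::'a::comm_ring_1) ^ card X) = 0"
proof -
  have "(\<Sum>X\<in>Pow A. (-1::'a) ^ card X) = (\<Prod>x\<in>A. 1 - 1)"
    by (subst prod_diff_conv_sum[OF assms(1)]) simp
  also have "\<dots> = 0"
    using assms by (simp add: zero_power card_gt_0_iff)
  finally show ?thesis .
qed

lemma moebius_1 [simp]: "moebius 1 = 1"
  by (simp add: moebius_def)

lemma moebius_Suc_0 [simp]: "moebius (Suc 0) = 1"
  using moebius_1 by (simp only: One_nat_def)

lemma moebius_prime: "prime p \<Longrightarrow> moebius p = -1"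
  by (simp add: moebius_def squarefree_prime prime_prime_factors)

lemma abs_moebius_le_1: "\<bar>moebius n\<bar> \<le> 1"
  by (simp add: moebius_def)

lemma prime_factors_Prod_primes:
  assumes "finite P" "\<forall>p\<in>P. prime (p::nat)"
  shows "prime_factors (\<Prod>P) = P"
proof -
  have "prime_factors (\<Prod>P) = \<Union>((prime_factors \<circ> (\<lambda>p. p)) ` P)"
    using assms by (intro prime_factors_prod) auto
  also have "\<dots> = P"
    using assms(2) by (auto simp: prime_prime_factors)
  finally show ?thesis .
qed

lemma squarefree_Prod_primes:
  assumes "finite P" "\<forall>p\<in>P. prime (p::nat)"
  shows "squarefree (\<Prod>P)"
  using assms by (intro squarefree_prod_coprime) (auto simp: primes_coprime squarefree_prime)

lemma moebius_Prod_primes: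
  assumes "finite P" "\<forall>p\<in>P. prime (p::nat)"
  shows "moebius (\<Prod>P) = (-1) ^ card P"
proof -
  have "squarefree (\<Prod>P)"
    using assms by (rule squarefree_Prod_primes)
  then have "\<Prod>P \<noteq> 0"
    by (metis not_squarefree_0)
  with \<open>squarefree (\<Prod>P)\<close> show ?thesis
    by (simp add: moebius_def prime_factors_Prod_primes[OF assms])
qed

lemma bij_betw_Prod_squarefree_divisors:
  fixes m :: nat
  assumes "m \<noteq> 0"
  shows "bij_betw Prod (Pow (prime_factors m)) {d. d dvd m \<and> squarefree d}"
proof (rule bij_betw_byWitness[where f' = prime_factors])
  show "\<forall>X\<in>Pow (prime_factors m). prime_factors (\<Prod>X) = X"
  proof
    fix X assume "X \<in> Pow (prime_factors m)"
    then show "prime_factors (\<Prod>X) = X"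
      by (intro prime_factors_Prod_primes) (auto intro: finite_subset)
  qed
  show "\<forall>d\<in>{d. d dvd m \<and> squarefree d}. \<Prod>(prime_factors d) = d"
  proof
    fix d :: nat assume "d \<in> {d. d dvd m \<and> squarefree d}"
    then have "squarefree d"
      by simp
    then have "d \<noteq> 0"
      by (metis not_squarefree_0)
    have "\<forall>p\<in>prime_factors d. multiplicity p d = 1"
      using squarefree_factorial_semiring'[OF \<open>d \<noteq> 0\<close>] \<open>squarefree d\<close> by auto
    then have "\<Prod>(prime_factors d) = (\<Prod>p\<in>prime_factors d. p ^ multiplicity p d)"
      by simp
    also have "\<dots> = d"
      using prod_prime_factors[OF \<open>d \<noteq> 0\<close>] by simp
    finally show "\<Prod>(prime_factors d) = d" .
  qed
  show "Prod ` Pow (prime_factors m) \<subseteq> {d. d dvd m \<and> squarefree d}"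
  proof safe
    fix X assume X: "X \<subseteq> prime_factors m"
    then show "squarefree (\<Prod>X)"
      by (auto intro: squarefree_Prod_primes finite_subset)
    have "\<Prod>X dvd \<Prod>(prime_factors m)"
      using X by (intro prod_dvd_prod_subset) auto
    also have "\<dots> dvd (\<Prod>p\<in>prime_factors m. p ^ multiplicity p m)"
      by (intro prod_dvd_prod dvd_power) (auto simp: prime_factors_multiplicity)
    also have "\<dots> = m"
      using prod_prime_factors[OF assms] by simp
    finally show "\<Prod>X dvd m" .
  qed
  show "prime_factors ` {d. d dvd m \<and> squarefree d} \<subseteq> Pow (prime_factors m)"
    using dvd_prime_factors[OF assms] by auto
qed

lemma sum_moebius_divisors:
  fixes m :: nat
  assumes "m > 1"
  shows "(\<Sum>d | d dvd m. moebius d) = 0"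
proof -
  have "m \<noteq> 0"
    using assms by simp
  have "prime_factors m \<noteq> {}"
    using assms by (simp add: prime_factorization_empty_iff)
  have "(\<Sum>d | d dvd m. moebius d) = (\<Sum>d | d dvd m \<and> squarefree d. moebius d)"
    using \<open>m \<noteq> 0\<close> by (intro sum.mono_neutral_right) (auto simp: moebius_def)
  also have "\<dots> = (\<Sum>X\<in>Pow (prime_factors m). moebius (\<Prod>X))"
    by (rule sum.reindex_bij_betw[OF bij_betw_Prod_squarefree_divisors[OF \<open>m \<noteq> 0\<close>], symmetric])
  also have "\<dots> = (\<Sum>X\<in>Pow (prime_factors m). (-1) ^ card X)"
    by (intro sum.cong) (auto intro: moebius_Prod_primes finite_subset)
  also have "\<dots> = 0"
    using \<open>prime_factors m \<noteq> {}\<close> by (intro sum_Pow_neg_one_power_card) auto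
  finally show ?thesis .
qed

lemma sum_moebius_divisors_upto:
  assumes "1 < m" "m \<le> n"
  shows "(\<Sum>k=1..n. if k dvd m then moebius k else 0) = 0"
proof -
  have "{k. k dvd m} \<subseteq> {1..n}"
  proof
    fix k assume "k \<in> {k. k dvd m}"
    then have "0 < k" "k \<le> m"
      using assms(1) by (auto intro: dvd_pos_nat[of m] dvd_imp_le)
    then show "k \<in> {1..n}"
      using assms(2) by simp
  qed
  then have "(\<Sum>k=1..n. if k dvd m then moebius k else 0) = (\<Sum>k | k dvd m. moebius k)"
    by (intro sum.mono_neutral_cong_right) auto
  also have "\<dots> = 0"
    using assms(1) by (rule sum_moebius_divisors)
  finally show ?thesis .
qed

section \<open>The Fibonacci--Redheffer determinant\<close>

lemma det_upper_triangular_prod: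
  assumes "upper_triangular A" "A \<in> carrier_mat n n"
  shows "det A = (\<Prod>i<n. A $$ (i, i))"
  using det_upper_triangular[OF assms] assms(2)
  by (simp add: prod_list_diag_prod lessThan_atLeast0)

lemma det_eq_corner_mult_minor:
  assumes A: "A \<in> carrier_mat n n" and "0 < n"
    and row0: "\<And>j. 0 < j \<Longrightarrow> j < n \<Longrightarrow> A $$ (0, j) = 0"
  shows "det A = A $$ (0, 0) * det (mat_delete A 0 0)"
proof -
  have "det A = (\<Sum>j<n. A $$ (0, j) * cofactor A 0 j)"
    by (rule laplace_expansion_row[OF A \<open>0 < n\<close>])
  also have "\<dots> = A $$ (0, 0) * cofactor A 0 0"
    using \<open>0 < n\<close> row0 by (subst sum.remove[of _ 0]) auto
  finally show ?thesis
    by (simp add: cofactor_def)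
qed

definition redheffer_mat :: "(nat \<Rightarrow> real) \<Rightarrow> nat \<Rightarrow> real mat" where
  "redheffer_mat f n = mat n n (\<lambda>(i, j).
      if j = 0 then 1 else if Suc i dvd Suc j then f (Suc i) else 0)"

lemma fib_redheffer_eq_redheffer_mat: "fib_redheffer n = redheffer_mat (\<lambda>k. real (fib k)) n"
  unfolding fib_redheffer_def redheffer_mat_def by (rule cong_mat) auto

definition moebius_elim_mat :: "(nat \<Rightarrow> real) \<Rightarrow> nat \<Rightarrow> real mat" where
  "moebius_elim_mat f n = mat n n (\<lambda>(i, j).
      if i = 0 then moebius (Suc j) / f (Suc j) else if i = j then 1 else 0)"

lemma det_moebius_elim_mat:
  assumes "0 < n"
  shows "det (moebius_elim_mat f n) = 1 / f 1"
proof -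
  have "upper_triangular (moebius_elim_mat f n)"
    by (auto simp: upper_triangular_def moebius_elim_mat_def)
  then have "det (moebius_elim_mat f n) = (\<Prod>i<n. moebius_elim_mat f n $$ (i, i))"
    by (rule det_upper_triangular_prod) (simp add: moebius_elim_mat_def)
  also have "\<dots> = (\<Prod>i<n. if i = 0 then 1 / f 1 else 1)"
    by (intro prod.cong) (auto simp: moebius_elim_mat_def)
  also have "\<dots> = 1 / f 1"
    using \<open>0 < n\<close> by (subst prod.remove[of _ 0]) auto
  finally show ?thesis .
qed

lemma moebius_elim_mat_mult_redheffer_mat:
  assumes f: "\<forall>k\<in>{1..n}. f k \<noteq> 0" and "i < n" "j < n"
  shows "(moebius_elim_mat f n * redheffer_mat f n) $$ (i, j) =
    (if i = 0 then if j = 0 then (\<Sum>k=1..n. moebius k / f k) else 0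
     else redheffer_mat f n $$ (i, j))"
proof -
  have entry: "(moebius_elim_mat f n * redheffer_mat f n) $$ (i, j) =
      (\<Sum>k<n. moebius_elim_mat f n $$ (i, k) * redheffer_mat f n $$ (k, j))"
    using \<open>i < n\<close> \<open>j < n\<close>
    by (auto simp: moebius_elim_mat_def redheffer_mat_def scalar_prod_def lessThan_atLeast0
        intro!: sum.cong)
  show ?thesis
  proof (cases "i = 0")
    case False
    have "(\<Sum>k<n. moebius_elim_mat f n $$ (i, k) * redheffer_mat f n $$ (k, j)) =
        (\<Sum>k<n. if k = i then redheffer_mat f n $$ (k, j) else 0)"
      using False \<open>i < n\<close> by (intro sum.cong) (auto simp: moebius_elim_mat_def)
    then show ?thesis
      using False \<open>i < n\<close> by (simp add: entry)
  next
    case True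
    have "(\<Sum>k<n. moebius (Suc k) / f (Suc k) * redheffer_mat f n $$ (k, j)) =
        (\<Sum>k<n. if j = 0 then moebius (Suc k) / f (Suc k)
                 else if Suc k dvd Suc j then moebius (Suc k) else 0)"
      using f \<open>j < n\<close> by (intro sum.cong) (auto simp: redheffer_mat_def)
    also have "\<dots> = (\<Sum>k=1..n. if j = 0 then moebius k / f k
                 else if k dvd Suc j then moebius k else 0)"
      by (rule sum_bounds_lt_plus1)
    also have "\<dots> = (if j = 0 then (\<Sum>k=1..n. moebius k / f k) else 0)"
      using sum_moebius_divisors_upto[of "Suc j" n] \<open>j < n\<close> by (cases "j = 0") simp_all
    finally show ?thesis
      unfolding entry using True \<open>j < n\<close> by (simp add: moebius_elim_mat_def)
  qed
qed

lemma det_redheffer_minor: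
  assumes "0 < n"
  shows "det (mat_delete (redheffer_mat f n) 0 0) = (\<Prod>k=2..n. f k)"
proof -
  define M where "M = mat_delete (redheffer_mat f n) 0 0"
  have M: "M \<in> carrier_mat (n - 1) (n - 1)"
    unfolding M_def by (rule mat_delete_carrier) (simp add: redheffer_mat_def)
  have M_entry: "M $$ (i, j) = (if Suc (Suc i) dvd Suc (Suc j) then f (Suc (Suc i)) else 0)"
    if "i < n - 1" "j < n - 1" for i j
    using that by (simp add: M_def mat_delete_def redheffer_mat_def)
  have "upper_triangular M"
    using M by (auto simp: upper_triangular_def M_entry dest: dvd_imp_le)
  then have "det M = (\<Prod>i<n - 1. M $$ (i, i))"
    using M by (rule det_upper_triangular_prod)
  also have "\<dots> = (\<Prod>i<n - 1. f (i + 2))"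
    by (intro prod.cong) (auto simp: M_entry)
  also have "\<dots> = (\<Prod>k=2..n. f k)"
    using \<open>0 < n\<close> by (intro prod.reindex_bij_witness[of _ "\<lambda>k. k - 2" "\<lambda>i. i + 2"]) auto
  finally show ?thesis
    by (simp add: M_def)
qed

lemma det_redheffer_mat:
  assumes "0 < n" and f: "\<forall>k\<in>{1..n}. f k \<noteq> 0"
  shows "det (redheffer_mat f n) = (\<Sum>k=1..n. moebius k / f k) * (\<Prod>k=1..n. f k)"
proof -
  let ?L = "moebius_elim_mat f n" and ?A = "redheffer_mat f n"
  have L: "?L \<in> carrier_mat n n" and A: "?A \<in> carrier_mat n n"
    by (simp_all add: moebius_elim_mat_def redheffer_mat_def)
  have LA: "?L * ?A \<in> carrier_mat n n"
    using L A by simp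
  have "det ?A / f 1 = det (?L * ?A)"
    using det_mult[OF L A] det_moebius_elim_mat[OF \<open>0 < n\<close>] by simp
  also have "\<dots> = (\<Sum>k=1..n. moebius k / f k) * det (mat_delete (?L * ?A) 0 0)"
    using det_eq_corner_mult_minor[OF LA \<open>0 < n\<close>] \<open>0 < n\<close>
    by (simp add: moebius_elim_mat_mult_redheffer_mat[OF f])
  also have "mat_delete (?L * ?A) 0 0 = mat_delete ?A 0 0"
  proof (rule eq_matI)
    fix i j assume "i < dim_row (mat_delete ?A 0 0)" "j < dim_col (mat_delete ?A 0 0)"
    then have "(?L * ?A) $$ (Suc i, Suc j) = ?A $$ (Suc i, Suc j)"
      using A by (subst moebius_elim_mat_mult_redheffer_mat[OF f]) auto
    then show "mat_delete (?L * ?A) 0 0 $$ (i, j) = mat_delete ?A 0 0 $$ (i, j)"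
      using \<open>i < _\<close> \<open>j < _\<close> L A by (simp add: mat_delete_def del: index_mult_mat(1))
  qed (use L A in simp_all)
  also have "det (mat_delete ?A 0 0) = (\<Prod>k=2..n. f k)"
    by (rule det_redheffer_minor[OF \<open>0 < n\<close>])
  finally have "det ?A = f 1 * ((\<Sum>k=1..n. moebius k / f k) * (\<Prod>k=2..n. f k))"
    using f \<open>0 < n\<close> by (simp add: field_simps)
  moreover have "(\<Prod>k=1..n. f k) = f 1 * (\<Prod>k=2..n. f k)"
    using \<open>0 < n\<close> by (subst prod.atLeast_Suc_atMost) (simp_all add: numeral_2_eq_2)
  ultimately show ?thesis
    by simp
qed

section \<open>The constants C and C_phi\<close>

lemma fib_ge_three_halves_power: "(3/2::real) ^ k \<le> real (fib (k + 2))"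
proof (induction k rule: fib.induct)
  case (3 k)
  have "(3/2::real) ^ Suc (Suc k) \<le> (3/2) ^ Suc k + (3/2) ^ k"
    by simp
  also have "\<dots> \<le> real (fib (Suc k + 2)) + real (fib (k + 2))"
    using "3.IH" by simp
  also have "\<dots> = real (fib (Suc (Suc k) + 2))"
    by (simp add: numeral_2_eq_2)
  finally show ?case .
qed (simp_all add: numeral_2_eq_2 numeral_3_eq_3)

lemma abs_moebius_div_fib_le: "\<bar>moebius (k + 2) / real (fib (k + 2))\<bar> \<le> (2/3) ^ k"
proof -
  have "(0::real) < (3/2) ^ k"
    by simp
  then have "\<bar>moebius (k + 2) / real (fib (k + 2))\<bar> \<le> 1 / (3/2) ^ k"
    using abs_moebius_le_1[of "k + 2"] fib_ge_three_halves_power[of k]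
    by (auto simp: abs_div_pos intro: frac_le)
  then show ?thesis
    by (simp add: power_divide)
qed

lemma summable_moebius_div_fib: "summable (\<lambda>k. moebius k / real (fib k))"
proof -
  have "summable (\<lambda>k. moebius (k + 2) / real (fib (k + 2)))"
    by (rule summable_comparison_test[OF _ summable_geometric[of "2/3"]])
      (use abs_moebius_div_fib_le in auto)
  then show ?thesis
    by (rule summable_iff_shift[THEN iffD1])
qed

lemma moebius_div_fib_partial_sums_LIMSEQ:
  "(\<lambda>n. \<Sum>k=1..n. moebius k / real (fib k)) \<longlonglongrightarrow> (\<Sum>k. moebius k / real (fib k))"
proof -
  have "(\<Sum>k=1..n. moebius k / real (fib k)) = (\<Sum>k<Suc n. moebius k / real (fib k))" for n
    by (simp add: atLeast0AtMost[symmetric] lessThan_Suc_atMost sum.atLeast_Suc_atMost)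
  then show ?thesis
    using LIMSEQ_Suc[OF summable_LIMSEQ[OF summable_moebius_div_fib]] by simp
qed

lemma const_C_eq_suminf: "const_C = (\<Sum>k. moebius k / real (fib k))"
  unfolding const_C_def using moebius_div_fib_partial_sums_LIMSEQ by (rule limI)

text \<open>The first five terms sum to \<open>1 - 1 - 1/2 + 0 - 1/5 = -7/10\<close>, and the tail from \<open>k = 6\<close>
  is at most \<open>\<Sum>j. (2/3)^(j+4) = 16/27\<close>.\<close>
lemma const_C_neg: "const_C < 0"
proof -
  let ?a = "\<lambda>k. moebius k / real (fib k)"
  have "\<not> squarefree (4::nat)"
    by (rule not_squarefreeI[of 2]) auto
  then have "moebius 4 = 0"
    by (simp add: moebius_def)
  moreover have "moebius 2 = -1" "moebius 3 = -1" "moebius 5 = -1"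
    by (simp_all add: moebius_prime)
  moreover have "fib 3 = 2" "fib 4 = 3" "fib 5 = 5"
    by (simp_all add: numeral_eq_Suc)
  moreover have "(\<Sum>k<6. ?a k) = ?a 0 + ?a 1 + ?a 2 + ?a 3 + ?a 4 + ?a 5"
    by (simp add: numeral_eq_Suc)
  ultimately have head: "(\<Sum>k<6. ?a k) = -7/10"
    by simp
  have tail_summable: "summable (\<lambda>j. ?a (j + 6))"
    using summable_moebius_div_fib by (rule summable_iff_shift[THEN iffD2])
  have "(\<Sum>j. ?a (j + 6)) \<le> (\<Sum>j. (2/3::real) ^ 4 * (2/3) ^ j)"
  proof (rule suminf_le[OF _ tail_summable])
    show "?a (j + 6) \<le> (2/3) ^ 4 * (2/3) ^ j" for j
      using abs_le_D1[OF abs_moebius_div_fib_le[of "j + 4"]]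
      by (simp add: power_add add.commute mult.commute)
    show "summable (\<lambda>j. (2/3::real) ^ 4 * (2/3) ^ j)"
      by (intro summable_mult summable_geometric) simp
  qed
  also have "\<dots> = (2/3) ^ 4 * (\<Sum>j. (2/3::real) ^ j)"
    by (intro suminf_mult summable_geometric) simp
  also have "\<dots> = 16/27"
    by (subst suminf_geometric) (simp_all add: power_divide)
  finally have "(\<Sum>j. ?a (j + 6)) \<le> 16/27" .
  moreover have "(\<Sum>k. ?a k) = (\<Sum>j. ?a (j + 6)) + (\<Sum>k<6. ?a k)"
    by (rule suminf_split_initial_segment[OF summable_moebius_div_fib])
  ultimately show ?thesis
    using head by (simp add: const_C_eq_suminf)
qed

lemma convergent_prod_one_minus_power:
  fixes q :: real
  assumes "\<bar>q\<bar> < 1"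
  shows "convergent_prod (\<lambda>k. 1 - q ^ Suc k)"
proof -
  have "summable (\<lambda>k. \<bar>q\<bar> * \<bar>q\<bar> ^ k)"
    using assms by (intro summable_mult summable_geometric) simp
  then have "summable (\<lambda>k. norm ((1 - q ^ Suc k) - 1))"
    by (simp add: power_abs abs_mult)
  then show ?thesis
    by (intro abs_convergent_prod_imp_convergent_prod summable_imp_abs_convergent_prod)
qed

lemma prodinf_one_minus_power_nonzero:
  fixes q :: real
  assumes "\<bar>q\<bar> < 1"
  shows "(\<Prod>k. 1 - q ^ Suc k) \<noteq> 0"
proof (rule prodinf_nonzero[OF convergent_prod_one_minus_power[OF assms]])
  fix k
  have "\<bar>q ^ Suc k\<bar> < 1"
    using assms by (simp add: power_abs power_less_one_iff del: power_Suc)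
  then show "1 - q ^ Suc k \<noteq> 0"
    by auto
qed

lemma phi_gt_1: "phi > 1"
  by (simp add: phi_def)

definition binet_ratio :: real where
  "binet_ratio = - (phi powr (-2))"

lemma binet_ratio_eq_neg_inverse: "binet_ratio = - 1 / phi ^ 2"
  using phi_gt_1 by (simp add: binet_ratio_def powr_minus powr_numeral divide_inverse)

lemma binet_ratio_eq: "binet_ratio = ((1 - sqrt 5) / 2) / phi"
proof -
  have "((1 - sqrt 5) / 2) * phi = -1"
    by (simp add: phi_def algebra_simps)
  then have "(1 - sqrt 5) / 2 = - 1 / phi"
    using phi_gt_1 by (simp add: field_simps)
  then show ?thesis
    by (simp add: binet_ratio_eq_neg_inverse power2_eq_square)
qed

lemma abs_binet_ratio_less_1: "\<bar>binet_ratio\<bar> < 1"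
proof -
  have "1 < phi ^ 2"
    using phi_gt_1 by (simp add: one_less_power)
  then show ?thesis
    by (simp add: binet_ratio_eq_neg_inverse divide_less_eq)
qed

lemma fib_eq_binet_ratio: "real (fib k) = phi ^ k * (1 - binet_ratio ^ k) / sqrt 5"
  using fib_closed_form[of k] phi_gt_1
  by (simp add: binet_ratio_eq phi_def[symmetric] power_divide right_diff_distrib)

lemma prod_fib_eq:
  "(\<Prod>k=1..n. real (fib k)) =
     (\<Prod>k<n. 1 - binet_ratio ^ Suc k) * phi powr (real (n * (n + 1)) / 2) * 5 powr (- real n / 2)"
proof -
  have "(\<Prod>k=1..n. real (fib k)) =
      (\<Prod>k=1..n. 1 - binet_ratio ^ k) * phi ^ (\<Sum>k=1..n. k) * (1 / sqrt 5) ^ n"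
    by (simp add: fib_eq_binet_ratio prod.distrib power_sum prod_dividef power_one_over)
  also have "(\<Prod>k=1..n. 1 - binet_ratio ^ k) = (\<Prod>k<n. 1 - binet_ratio ^ Suc k)"
    by (simp add: prod.atLeast1_atMost_eq)
  also have "phi ^ (\<Sum>k=1..n. k) = phi powr (real (n * (n + 1)) / 2)"
  proof -
    have gauss: "2 * (\<Sum>k=1..n. k) = n * (n + 1)"
      by (induction n) auto
    have "real (\<Sum>k=1..n. k) = real (n * (n + 1)) / 2"
      unfolding gauss[symmetric] by simp
    moreover have "phi ^ (\<Sum>k=1..n. k) = phi powr real (\<Sum>k=1..n. k)"
      using phi_gt_1 by (intro powr_realpow[symmetric]) simp
    ultimately show ?thesis
      by metis
  qed
  also have "(1 / sqrt 5) ^ n = 5 powr (- real n / 2)"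
    by (simp add: powr_minus_divide powr_half_sqrt[symmetric] powr_realpow[symmetric] powr_divide
        powr_powr)
  finally show ?thesis .
qed

lemma det_fib_redheffer:
  assumes "0 < n"
  shows "det (fib_redheffer n) =
    (\<Sum>k=1..n. moebius k / real (fib k)) * (\<Prod>k<n. 1 - binet_ratio ^ Suc k) *
    (phi powr (real (n * (n + 1)) / 2) * 5 powr (- real n / 2))"
proof -
  have "det (fib_redheffer n) = (\<Sum>k=1..n. moebius k / real (fib k)) * (\<Prod>k=1..n. real (fib k))"
    unfolding fib_redheffer_eq_redheffer_mat using assms
    by (intro det_redheffer_mat) (auto simp: fib_neq_0_nat)
  then show ?thesis
    by (simp only: prod_fib_eq mult.assoc)
qed

theorem theorem3:
  shows "convergent (\<lambda>n. \<Sum>k=1..n. moebius k / real (fib k))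
    \<and> convergent_prod (\<lambda>k. 1 - (- (phi powr (-2))) ^ (Suc k) :: real)
    \<and> (\<lambda>n. Determinant.det (fib_redheffer n)) \<sim>[at_top]
       (\<lambda>n. const_C * const_C_phi * phi powr (real (n * (n + 1)) / 2) * 5 powr (- real n / 2))"
proof (intro conjI)
  define S where "S n = (\<Sum>k=1..n. moebius k / real (fib k))" for n
  define Q where "Q n = (\<Prod>k<n. 1 - binet_ratio ^ Suc k)" for n
  define H where "H n = phi powr (real (n * (n + 1)) / 2) * 5 powr (- real n / 2)" for n
  show "convergent (\<lambda>n. \<Sum>k=1..n. moebius k / real (fib k))"
    using moebius_div_fib_partial_sums_LIMSEQ by (rule convergentI)
  have prod: "convergent_prod (\<lambda>k. 1 - binet_ratio ^ Suc k)"
    by (rule convergent_prod_one_minus_power[OF abs_binet_ratio_less_1])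
  then show "convergent_prod (\<lambda>k. 1 - (- (phi powr (-2))) ^ (Suc k) :: real)"
    by (simp add: binet_ratio_def)
  have "(\<lambda>n. S n * Q n) \<longlonglongrightarrow> const_C * const_C_phi"
    unfolding S_def Q_def const_C_eq_suminf const_C_phi_def binet_ratio_def[symmetric]
    using moebius_div_fib_partial_sums_LIMSEQ has_prod_imp_tendsto'[OF convergent_prod_has_prod[OF prod]]
    by (rule tendsto_mult)
  moreover have "const_C * const_C_phi \<noteq> 0"
    using const_C_neg prodinf_one_minus_power_nonzero[OF abs_binet_ratio_less_1]
    by (simp add: const_C_phi_def binet_ratio_def)
  ultimately have "(\<lambda>n. S n * Q n * H n) \<sim>[at_top] (\<lambda>n. const_C * const_C_phi * H n)"
    by (intro asymp_equiv_mult tendsto_imp_asymp_equiv_const asymp_equiv_refl)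
  moreover have "eventually (\<lambda>n. S n * Q n * H n = det (fib_redheffer n)) at_top"
    using eventually_gt_at_top[of 0] by eventually_elim (simp add: det_fib_redheffer S_def Q_def H_def)
  ultimately have "(\<lambda>n. det (fib_redheffer n)) \<sim>[at_top] (\<lambda>n. const_C * const_C_phi * H n)"
    by (rule asymp_equiv_transfer) simp
  then show "(\<lambda>n. Determinant.det (fib_redheffer n)) \<sim>[at_top]
       (\<lambda>n. const_C * const_C_phi * phi powr (real (n * (n + 1)) / 2) * 5 powr (- real n / 2))"
    by (simp add: H_def mult.assoc)
qed

end
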